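(* Let $d\ge3$, $0\le\eta<\frac12$, $0<\tilde c<\frac1{288}$, $0<\theta\le\frac{27}{50}\pi$ and $b=\frac{\tilde c(1-2\eta)\theta}{\sqrt d}$. Suppose $D$ (with uniform marginal on $\mathbb{S}^{d-1}$) satisfies the $\eta$-bounded noise condition with respect to a unit vector $u$. Let $w_t$ be a unit vector with $\theta_t:=\theta(w_t,u)$ satisfying $\frac14\theta\le\theta_t\le\frac53\theta$, and let $(x_t,y_t)$ be drawn from $D$ conditioned on $R_t=\{(x,y): x\cdot w_t\in[\frac b2,b]\}$. Let $w_{t+1}=w_t-2\,\mathbb{1}\{y_t\,w_t\cdot x_t<0\}(w_t\cdot x_t)x_t$ and $\theta_{t+1}=\theta(w_{t+1},u)$. Then $$\mathbb{E}[\cos\theta_{t+1}-\cos\theta_t\mid\theta_t]\ \ge\ \frac{\tilde c}{100\pi}\,\frac{(1-2\eta)^2\theta^2}{d}.$$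
   Context: $\mathbb{S}^{d-1}$ is the unit sphere in $\mathbb{R}^d$; $D$ is a distribution on $\mathbb{S}^{d-1}\times\{-1,+1\}$ whose marginal is uniform on $\mathbb{S}^{d-1}$. $\theta(v_1,v_2)=\arccos(v_1\cdot v_2)$. $\eta$-bounded noise w.r.t. $u$: for all $x$, $\mathbb{P}[Y\neq\operatorname{sign}(u\cdot x)\mid X=x]\le\eta$. *)

theory Defs
  imports "HOL-Probability.Probability"
begin

definition vangle :: "real^'n \<Rightarrow> real^'n \<Rightarrow> real" where
  "vangle v1 v2 = arccos (v1 \<bullet> v2)"

text \<open>Uniform (normalised surface) measure on the unit sphere S^{d-1}:
  the push-forward of the uniform distribution on the unit ball under radial
  projection x \<mapsto> x/|x| (the cone-measure construction).\<close>
definition unif_sphere :: "(real^'n) measure" where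
  "unif_sphere = distr (uniform_measure lborel (ball 0 1)) borel (\<lambda>x. (1 / norm x) *\<^sub>R x)"

text \<open>eta-bounded noise w.r.t. u, stated for every measurable set A of instances:
  P[X \<in> A, Y \<noteq> sign(u.X)] \<le> eta * P[X \<in> A]
  (equivalent to P[Y \<noteq> sign(u.x) | X = x] \<le> eta for (almost) all x).\<close>
definition bounded_noise :: "((real^'n) \<times> real) measure \<Rightarrow> real \<Rightarrow> real^'n \<Rightarrow> bool" where
  "bounded_noise D eta u \<longleftrightarrow>
     (\<forall>A \<in> sets (borel :: (real^'n) measure).
        measure D {(x, y). x \<in> A \<and> y \<noteq> sgn (u \<bullet> x)} \<le> eta * measure D {(x, y). x \<in> A})"

end

theory Submission
  imports Defs
begin

definition reflect :: "'a::real_inner \<Rightarrow> 'a \<Rightarrow> 'a" where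
  "reflect n x = x - (2 * (x \<bullet> n)) *\<^sub>R n"

lemma reflect_orthogonal [simp]: "x \<bullet> n = 0 \<Longrightarrow> reflect n x = x"
  by (simp add: reflect_def)

lemma reflect_unit_self: "norm n = 1 \<Longrightarrow> reflect n n = - n"
  by (simp add: reflect_def dot_square_norm scaleR_2)

lemma inner_reflect_left: "norm n = 1 \<Longrightarrow> reflect n x \<bullet> y = x \<bullet> reflect n y"
  by (simp add: reflect_def inner_diff_left inner_diff_right algebra_simps inner_commute)

lemma orthogonal_transformation_reflect:
  assumes "norm n = 1"
  shows "orthogonal_transformation (reflect n)"
proof -
  have "n \<bullet> n = 1" using assms by (simp add: dot_square_norm)
  then show ?thesis
    unfolding orthogonal_transformation_def reflect_def
    by (auto simp: linear_iff inner_diff_left inner_diff_right algebra_simps inner_commute)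
qed

lemma orthogonal_transformation_exchange:
  fixes p q :: "'a::real_inner"
  assumes "norm p = norm q"
  obtains f where "orthogonal_transformation f" "f p = q" "\<And>z. z \<bullet> p = z \<bullet> q \<Longrightarrow> f z = z"
proof (cases "p = q")
  case True
  then show ?thesis using that[of id] by (simp add: id_def)
next
  case False
  define n where "n = (1 / norm (p - q)) *\<^sub>R (p - q)"
  have nz: "norm (p - q) \<noteq> 0" using False by simp
  have n: "norm n = 1" unfolding n_def using nz by simp
  have "p \<bullet> p = q \<bullet> q" using assms by (simp add: dot_square_norm)
  then have sq: "norm (p - q) * norm (p - q) = 2 * (p \<bullet> (p - q))"
    by (simp add: power2_eq_square[symmetric] power2_norm_eq_inner inner_diff_left inner_diff_right inner_commute)
  have "p \<bullet> n * norm (p - q) = p \<bullet> (p - q)"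
    using nz unfolding n_def by (simp only: inner_scaleR_right) simp
  then have "2 * (p \<bullet> n) = norm (p - q)"
    using sq nz by (metis mult.assoc mult_right_cancel)
  then have "(2 * (p \<bullet> n)) *\<^sub>R n = p - q"
    using nz by (simp add: n_def)
  then have "reflect n p = q" by (simp add: reflect_def)
  moreover have "reflect n z = z" if "z \<bullet> p = z \<bullet> q" for z
    using that by (simp add: n_def inner_diff_right inner_commute)
  ultimately show ?thesis using that orthogonal_transformation_reflect[OF n] by blast
qed

text \<open>Any two pairs of vectors with the same Gram matrix are related by an orthogonal map:
  move \<open>p\<close> to \<open>p'\<close>, then reflect the image of \<open>q\<close> onto \<open>q'\<close> across a hyperplane containing \<open>p'\<close>.\<close>
lemma orthogonal_transformation_exists_pair:
  fixes p q p' q' :: "'a::real_inner"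
  assumes "norm p = norm p'" "norm q = norm q'" "p \<bullet> q = p' \<bullet> q'"
  obtains f where "orthogonal_transformation f" "f p = p'" "f q = q'"
proof -
  obtain f1 where f1: "orthogonal_transformation f1" "f1 p = p'"
    using orthogonal_transformation_exchange[OF assms(1)] by blast
  have "norm (f1 q) = norm q'" using f1 assms(2) by (simp add: orthogonal_transformation_norm)
  then obtain f2 where f2: "orthogonal_transformation f2" "f2 (f1 q) = q'"
      and f2_fixes: "\<And>z. z \<bullet> f1 q = z \<bullet> q' \<Longrightarrow> f2 z = z"
    using orthogonal_transformation_exchange by blast
  have "p' \<bullet> f1 q = p' \<bullet> q'"
    using f1 assms(3) by (metis orthogonal_transformation_def)
  then have "f2 p' = p'" by (rule f2_fixes)
  then show ?thesis
    using that[of "f2 \<circ> f1"] f1 f2 by (simp add: orthogonal_transformation_compose)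
qed

text \<open>The library's \<open>measure_linear_image\<close> needs a well-ordered index type (for the
  determinant); without the determinant, the reduction to elementary maps works for any finite
  index type.\<close>
lemma linear_image_measure_proportional:
  fixes f :: "real^'n \<Rightarrow> real^'n"
  assumes "linear f"
  shows "\<exists>c\<ge>0. \<forall>S\<in>lmeasurable. f ` S \<in> lmeasurable \<and> measure lebesgue (f ` S) = c * measure lebesgue S"
    (is "?P f")
proof -
  have box_preserving: "?P g"
    if g: "linear g" and box: "\<And>a b. measure lebesgue (g ` cbox a b) = measure lebesgue (cbox a b)" for g
  proof (intro exI[of _ 1] conjI ballI)
    fix S :: "(real^'n) set" assume "S \<in> lmeasurable"
    from measure_linear_sufficient[OF g this, of 1] box
    show "g ` S \<in> lmeasurable" "measure lebesgue (g ` S) = 1 * measure lebesgue S"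
      by simp_all
  qed simp
  show ?thesis
  proof (rule induct_linear_elementary[OF assms])
    fix g h :: "real^'n \<Rightarrow> real^'n"
    assume "?P g" "?P h"
    then obtain c d where "c \<ge> 0" "d \<ge> 0"
      and g: "\<forall>S\<in>lmeasurable. g ` S \<in> lmeasurable \<and> measure lebesgue (g ` S) = c * measure lebesgue S"
      and h: "\<forall>S\<in>lmeasurable. h ` S \<in> lmeasurable \<and> measure lebesgue (h ` S) = d * measure lebesgue S"
      by blast
    have "(g \<circ> h) ` S = g ` h ` S" for S
      by (simp add: image_comp)
    then show "?P (g \<circ> h)"
      using g h \<open>c \<ge> 0\<close> \<open>d \<ge> 0\<close> by (intro exI[of _ "c * d"]) (simp add: mult.assoc)
  next
    fix g :: "real^'n \<Rightarrow> real^'n" and i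
    assume g: "linear g" and "\<And>x. g x $ i = 0"
    then have "\<not> inj g"
      by (metis linear_injective_imp_surjective one_neq_zero surjE vec_component)
    then have "negligible (g ` S)" for S
      using g negligible_linear_singular_image by blast
    then have "g ` S \<in> lmeasurable \<and> measure lebesgue (g ` S) = 0" for S
      by (simp add: negligible_imp_measure0 negligible_iff_null_sets fmeasurableI_null_sets)
    then show "?P g"
      by auto
  next
    fix c :: "'n \<Rightarrow> real"
    show "?P (\<lambda>x. \<chi> i. c i * x $ i)"
      by (intro exI[of _ "\<bar>prod c UNIV\<bar>"]) (simp add: measurable_stretch measure_stretch)
  next
    fix m n :: 'n
    assume "m \<noteq> n"
    define t where "t = Transposition.transpose m n"
    have lin: "linear (\<lambda>x::real^'n. \<chi> i. x $ t i)"
      by (rule linearI) (simp_all add: plus_vec_def scaleR_vec_def)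
    have box: "(\<lambda>x. \<chi> i. x $ t i) ` cbox a b = cbox (\<chi> i. a $ t i) (\<chi> i. b $ t i)" for a b :: "real^'n"
      unfolding t_def
      by (auto simp: image_iff lambda_swap_Galois mem_box_cart) (metis transpose_involutory)+
    have perm: "prod (\<lambda>i. b $ t i - a $ t i) UNIV = prod (\<lambda>i. b $ i - a $ i) UNIV" for a b :: "real^'n"
      using prod.permute[OF permutes_swap_id, where S=UNIV and g="\<lambda>i. b $ i - a $ i"]
      by (simp add: t_def o_def)
    then have "measure lebesgue (cbox (\<chi> i. a $ t i) (\<chi> i. b $ t i)) = measure lebesgue (cbox a b)" for a b :: "real^'n"
    proof -
      have "cbox (\<chi> i. a $ t i) (\<chi> i. b $ t i) = {} \<longleftrightarrow> cbox a b = {}"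
        using box[of a b] by (metis image_is_empty)
      then show ?thesis
        using perm by (simp add: content_cbox_if_cart del: measure_lborel_cbox_eq)
    qed
    then have "measure lebesgue ((\<lambda>x. \<chi> i. x $ t i) ` cbox a b) = measure lebesgue (cbox a b)"
      for a b :: "real^'n"
      unfolding box .
    then show "?P (\<lambda>x. \<chi> i. x $ Transposition.transpose m n i)"
      unfolding t_def[symmetric] by (rule box_preserving[OF lin])
  next
    fix m n :: 'n
    assume "m \<noteq> n"
    define g where "g = (\<lambda>x::real^'n. \<chi> i. if i = m then x $ m + x $ n else x $ i)"
    have lin: "linear g"
      unfolding g_def by (rule linearI) (auto simp: algebra_simps plus_vec_def scaleR_vec_def vec_eq_iff)
    have "measure lebesgue (g ` cbox a b) = measure lebesgue (cbox a b)" for a b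
    proof (cases "cbox a b = {}")
      case False
      have "cbox a b = (+) a ` cbox 0 (b - a)"
        using cbox_translation[of a 0 "b - a"] by simp
      then have "g ` cbox a b = (+) (g a) ` g ` cbox 0 (b - a)"
        by (simp add: image_image linear_add[OF lin])
      then have "measure lebesgue (g ` cbox a b) = measure lebesgue (g ` cbox 0 (b - a))"
        by (simp add: measure_translation)
      also have "\<dots> = measure lebesgue (cbox 0 (b - a))"
        unfolding g_def using False \<open>m \<noteq> n\<close>
        by (intro measure_shear_interval) (auto simp: box_ne_empty inner_diff_left)
      also have "\<dots> = measure lebesgue (cbox a b)"
        using cbox_translation[of a 0 "b - a"] by (simp add: measure_translation)
      finally show ?thesis .
    qed simp
    then show "?P (\<lambda>x. \<chi> i. if i = m then x $ m + x $ n else x $ i)"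
      unfolding g_def[symmetric] by (rule box_preserving[OF lin])
  qed
qed

lemma borel_measurable_orthogonal_transformation:
  fixes f :: "'a::euclidean_space \<Rightarrow> 'a"
  assumes "orthogonal_transformation f"
  shows "f \<in> borel_measurable borel"
  using assms by (intro borel_measurable_continuous_onI linear_continuous_on)
    (simp add: orthogonal_transformation_linear flip: linear_conv_bounded_linear)

lemma
  fixes f :: "real^'n \<Rightarrow> real^'n"
  assumes f: "orthogonal_transformation f" and S: "S \<in> lmeasurable"
  shows lmeasurable_orthogonal_image: "f ` S \<in> lmeasurable"
    and measure_orthogonal_image_eq: "measure lebesgue (f ` S) = measure lebesgue S"
proof -
  obtain c where c: "\<forall>S\<in>lmeasurable. f ` S \<in> lmeasurable \<and> measure lebesgue (f ` S) = c * measure lebesgue S"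
    using linear_image_measure_proportional[OF orthogonal_transformation_linear[OF f]] by blast
  have "f ` ball 0 1 = ball 0 1"
    using image_orthogonal_transformation_ball[OF f, of 0 1] f
    by (simp add: linear_0 orthogonal_transformation_linear)
  then have "measure lebesgue (ball (0::real^'n) 1) = c * measure lebesgue (ball (0::real^'n) 1)"
    using c by (metis lmeasurable_ball)
  moreover have "measure lebesgue (ball (0::real^'n) 1) > 0"
    using content_ball_pos[of 1 "0::real^'n"] by simp
  ultimately have "c = 1" by simp
  with c S show "f ` S \<in> lmeasurable" "measure lebesgue (f ` S) = measure lebesgue S"
    by simp_all
qed

lemma emeasure_lborel_orthogonal_vimage:
  fixes f :: "real^'n \<Rightarrow> real^'n"
  assumes f: "orthogonal_transformation f" and B: "B \<in> sets borel" "bounded B"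
  shows "emeasure lborel (f -` B) = emeasure lborel B"
proof -
  have finite: "emeasure lborel S = ennreal (measure lebesgue S)" if "S \<in> sets borel" "bounded S" for S
    using that emeasure_bounded_finite[of S] by (simp add: emeasure_eq_ennreal_measure)
  have "f -` B = inv f ` B"
    using f by (simp add: bij_vimage_eq_inv_image orthogonal_transformation_bij)
  moreover have "B \<in> lmeasurable"
    using B by (intro bounded_set_imp_lmeasurable) auto
  ultimately have "measure lebesgue (f -` B) = measure lebesgue B"
    using orthogonal_transformation_inv[OF f] by (simp add: measure_orthogonal_image_eq)
  moreover have "f -` B \<in> sets borel"
    using borel_measurable_orthogonal_transformation[OF f] B by (simp add: measurable_sets_borel)
  moreover have "bounded (f -` B)"
    using B(2) f unfolding bounded_iff by (metis orthogonal_transformation_norm vimageE)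
  ultimately show ?thesis
    using B by (simp add: finite)
qed

lemma prob_space_unif_sphere: "prob_space (unif_sphere :: (real^'n) measure)"
proof -
  have "emeasure lborel (ball (0::real^'n) 1) = ennreal (measure lborel (ball (0::real^'n) 1))"
    using emeasure_lborel_ball_finite[of "0::real^'n" 1] by (simp add: emeasure_eq_ennreal_measure)
  then have "emeasure lborel (ball (0::real^'n) 1) \<noteq> 0"
    using content_ball_pos[of 1 "0::real^'n"] by simp
  then have "prob_space (uniform_measure lborel (ball (0::real^'n) 1))"
    using emeasure_lborel_ball_finite[of "0::real^'n" 1] by (intro prob_space_uniform_measure) auto
  then show ?thesis
    unfolding unif_sphere_def by (rule prob_space.prob_space_distr) simp
qed

lemma sets_unif_sphere [simp, measurable_cong]: "sets (unif_sphere :: (real^'n) measure) = sets borel"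
  by (simp add: unif_sphere_def)

lemma space_unif_sphere [simp]: "space (unif_sphere :: (real^'n) measure) = UNIV"
  by (simp add: unif_sphere_def)

lemma AE_unif_sphere_norm: "AE x in (unif_sphere :: (real^'n) measure). norm x = 1"
proof -
  have "AE x in uniform_measure lborel (ball (0::real^'n) 1). x \<noteq> 0"
    using AE_lborel_singleton[of 0] by (intro AE_uniform_measureI) (auto elim: eventually_mono)
  then have "AE x in uniform_measure lborel (ball (0::real^'n) 1). norm ((1 / norm x) *\<^sub>R x) = 1"
    by eventually_elim simp
  then show ?thesis
    unfolding unif_sphere_def by (subst AE_distr_iff) simp_all
qed

lemma distr_unif_sphere_orthogonal:
  fixes f :: "real^'n \<Rightarrow> real^'n"
  assumes f: "orthogonal_transformation f"
  shows "distr unif_sphere borel f = unif_sphere"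
proof -
  let ?U = "uniform_measure lborel (ball (0::real^'n) 1)"
  have ball: "distr ?U borel f = ?U"
  proof (rule measure_eqI)
    fix A :: "(real^'n) set" assume "A \<in> sets (distr ?U borel f)"
    then have A: "A \<in> sets borel" by simp
    have "ball 0 1 \<inter> f -` A = f -` (A \<inter> ball 0 1)"
      using f by (auto simp: orthogonal_transformation_norm)
    moreover have "emeasure lborel (f -` (A \<inter> ball 0 1)) = emeasure lborel (A \<inter> ball 0 1)"
      using A by (intro emeasure_lborel_orthogonal_vimage[OF f]) auto
    ultimately have "emeasure lborel (ball 0 1 \<inter> f -` A) = emeasure lborel (A \<inter> ball 0 1)"
      by (simp only:)
    then show "emeasure (distr ?U borel f) A = emeasure ?U A"
      using A borel_measurable_orthogonal_transformation[OF f]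
        measurable_sets_borel[OF borel_measurable_orthogonal_transformation[OF f] A]
      by (simp add: emeasure_distr inf_commute[of "ball 0 1"])
  qed simp
  have "f \<circ> (\<lambda>x. (1 / norm x) *\<^sub>R x) = (\<lambda>x. (1 / norm x) *\<^sub>R x) \<circ> f"
    using f by (intro ext) (simp add: orthogonal_transformation_norm orthogonal_transformation_scaleR)
  then have "distr unif_sphere borel f = distr (distr ?U borel f) borel (\<lambda>x. (1 / norm x) *\<^sub>R x)"
    unfolding unif_sphere_def using borel_measurable_orthogonal_transformation[OF f]
    by (simp add: distr_distr)
  then show ?thesis
    by (simp add: ball unif_sphere_def)
qed

lemma integral_unif_sphere_orthogonal:
  fixes f :: "real^'n \<Rightarrow> real^'n" and g :: "real^'n \<Rightarrow> real"
  assumes f: "orthogonal_transformation f" and g: "g \<in> borel_measurable borel"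
  shows "(\<integral>x. g (f x) \<partial>unif_sphere) = integral\<^sup>L unif_sphere g"
  using integral_distr[of f unif_sphere borel g] borel_measurable_orthogonal_transformation[OF f] g
  by (simp add: distr_unif_sphere_orthogonal f)

lemma integrable_unif_sphere_bounded:
  fixes g :: "real^'n \<Rightarrow> real"
  assumes "g \<in> borel_measurable borel" and "\<And>x. norm x = 1 \<Longrightarrow> \<bar>g x\<bar> \<le> B"
  shows "integrable unif_sphere g"
proof -
  interpret prob_space "unif_sphere :: (real^'n) measure" by (rule prob_space_unif_sphere)
  show ?thesis
    using AE_unif_sphere_norm assms by (intro integrable_const_bound[where B=B]) (auto elim!: eventually_mono)
qed

lemma borel_measurable_inner_pair:
  fixes G :: "real \<Rightarrow> real \<Rightarrow> real" and p q :: "'a::euclidean_space"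
  assumes "(\<lambda>(s, t). G s t) \<in> borel_measurable borel"
  shows "(\<lambda>x. G (x \<bullet> p) (x \<bullet> q)) \<in> borel_measurable borel"
proof -
  have "(\<lambda>x::'a. (x \<bullet> p, x \<bullet> q)) \<in> measurable borel (borel \<Otimes>\<^sub>M borel)"
    by measurable
  then have "(\<lambda>x::'a. (x \<bullet> p, x \<bullet> q)) \<in> measurable borel borel"
    by (simp add: borel_prod)
  from measurable_compose[OF this assms] show ?thesis
    by simp
qed

lemma integral_unif_sphere_inner_pair:
  fixes p q p' q' :: "real^'n" and G :: "real \<Rightarrow> real \<Rightarrow> real"
  assumes G: "(\<lambda>(s, t). G s t) \<in> borel_measurable borel"
    and gram: "norm p = norm p'" "norm q = norm q'" "p \<bullet> q = p' \<bullet> q'"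
  shows "(\<integral>x. G (x \<bullet> p) (x \<bullet> q) \<partial>unif_sphere) = (\<integral>x. G (x \<bullet> p') (x \<bullet> q') \<partial>unif_sphere)"
proof -
  obtain f where f: "orthogonal_transformation f" "f p = p'" "f q = q'"
    using orthogonal_transformation_exists_pair[OF gram] by blast
  then have "f x \<bullet> p' = x \<bullet> p" "f x \<bullet> q' = x \<bullet> q" for x
    by (metis orthogonal_transformation_def)+
  then show ?thesis
    using integral_unif_sphere_orthogonal[OF f(1) borel_measurable_inner_pair[OF G, of p' q']] by simp
qed

lemma integral_unif_sphere_inner:
  fixes w :: "real^'n" and k :: 'n and g :: "real \<Rightarrow> real"
  assumes "g \<in> borel_measurable borel" and "norm w = 1"
  shows "(\<integral>x. g (x \<bullet> w) \<partial>unif_sphere) = (\<integral>x. g (x $ k) \<partial>unif_sphere)"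
proof -
  have "(\<lambda>(s, t::real). g s) \<in> borel_measurable borel"
    using assms(1) by (simp add: case_prod_beta borel_prod[symmetric])
  then show ?thesis
    using integral_unif_sphere_inner_pair[where G="\<lambda>s t. g s" and q=0 and q'=0 and p=w and p'="axis k 1"]
      assms(2) by (simp add: inner_axis)
qed

lemma integral_unif_sphere_inner_orthonormal:
  fixes w v :: "real^'n" and j k :: 'n and G :: "real \<Rightarrow> real \<Rightarrow> real"
  assumes "(\<lambda>(s, t). G s t) \<in> borel_measurable borel"
    and "norm w = 1" "norm v = 1" "w \<bullet> v = 0" "j \<noteq> k"
  shows "(\<integral>x. G (x \<bullet> w) (x \<bullet> v) \<partial>unif_sphere) = (\<integral>x. G (x $ k) (x $ j) \<partial>unif_sphere)"
proof -
  have "axis k 1 \<bullet> axis j (1::real) = 0"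
    using \<open>j \<noteq> k\<close> by (simp add: inner_axis_axis)
  then show ?thesis
    using integral_unif_sphere_inner_pair[where G=G and p=w and q=v and p'="axis k 1" and q'="axis j 1"]
      assms by (simp only: norm_axis_1 inner_axis real_inner_1_right)
qed

lemma abs_inner_le_1: "norm x = 1 \<Longrightarrow> norm y = 1 \<Longrightarrow> \<bar>x \<bullet> y\<bar> \<le> 1"
  using Cauchy_Schwarz_ineq2[of x y] by simp

lemma abs_component_le_1: "norm (x::real^'n) = 1 \<Longrightarrow> \<bar>x $ i\<bar> \<le> 1"
  using component_le_norm_cart[of x i] by simp

lemma sum_power2_components_remove:
  "(\<Sum>i\<in>UNIV - {k}. (x $ i)^2) = (norm (x::real^'n))^2 - (x $ k)^2"
proof -
  have "(norm x)^2 = x \<bullet> x"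
    by (rule power2_norm_eq_inner)
  also have "\<dots> = (\<Sum>i\<in>UNIV. (x $ i)^2)"
    by (simp add: inner_vec_def power2_eq_square)
  also have "\<dots> = (x $ k)^2 + (\<Sum>i\<in>UNIV - {k}. (x $ i)^2)"
    by (simp add: sum.remove[of UNIV k])
  finally show ?thesis by simp
qed

lemma quadratic_minus_quartic_le:
  fixes r :: real
  assumes "0 \<le> r"
  shows "r^2 - r^4 / 4 \<le> r"
proof (cases "r \<le> 1")
  case True
  then have "r^2 \<le> r"
    using assms by (simp add: power2_eq_square mult_left_le_one_le)
  moreover have "0 \<le> r^4"
    by simp
  ultimately show ?thesis
    by linarith
next
  case False
  have "r^2 - r^4 / 4 = 1 - (1 - r^2 / 2)^2"
    by (simp add: power2_eq_square power4_eq_xxxx field_simps)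
  moreover have "0 \<le> (1 - r^2 / 2)^2"
    by simp
  ultimately show ?thesis
    using False by linarith
qed

lemma abs_ge_quadratic_minus_quartic:
  fixes c t :: real
  assumes c: "0 < c"
  shows "c / 2 * t^2 - c^3 / 32 * t^4 \<le> \<bar>t\<bar>"
proof -
  have "(c * \<bar>t\<bar> / 2)^2 - (c * \<bar>t\<bar> / 2)^4 / 4 \<le> c * \<bar>t\<bar> / 2"
    using c by (intro quadratic_minus_quartic_le) simp
  then have "c / 2 * (c / 2 * t^2 - c^3 / 32 * t^4) \<le> c / 2 * \<bar>t\<bar>"
    by (simp add: power_mult_distrib power_divide field_simps power2_eq_square power4_eq_xxxx power3_eq_cube)
  then show ?thesis
    using c by simp
qed

lemma moment_combination_bound:
  fixes d P m2 m4 :: real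
  assumes d: "2 \<le> d" and P: "0 \<le> P"
    and m2: "15 * P \<le> 16 * (d - 1) * m2" and m4: "(d - 1) * (d + 1) * m4 \<le> 3 * P"
  shows "P / 3 \<le> d * (m2 / 2 - d * m4 / 32)"
proof -
  have "3 * d * (d + 1) * (15 * P) \<le> 3 * d * (d + 1) * (16 * (d - 1) * m2)"
    using d by (intro mult_left_mono[OF m2]) simp
  moreover have "3 * d^2 * ((d - 1) * (d + 1) * m4) \<le> 3 * d^2 * (3 * P)"
    by (rule mult_left_mono[OF m4]) simp
  moreover have "32 * (d^2 - 1) \<le> 36 * d^2 + 45 * d"
  proof -
    have "0 \<le> 4 * d^2 + 45 * d + 32"
      using d by simp
    then show ?thesis
      by (simp add: algebra_simps)
  qed
  then have "32 * (d^2 - 1) * P \<le> (36 * d^2 + 45 * d) * P"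
    using P by (rule mult_right_mono)
  ultimately have "96 * (d^2 - 1) * (P / 3) \<le> 96 * (d^2 - 1) * (d * (m2 / 2 - d * m4 / 32))"
    by (simp add: algebra_simps power2_eq_square)
  moreover have "0 < 96 * (d^2 - 1)"
    using d one_less_power[of d 2] by simp
  ultimately show ?thesis
    by (rule mult_left_le_imp_le)
qed
context
  fixes h :: "real \<Rightarrow> real"
  assumes h_measurable [measurable]: "h \<in> borel_measurable borel"
    and h_bounded: "\<And>t. \<bar>h t\<bar> \<le> 1"
begin

lemma integrable_weighted:
  fixes l g :: "real^'n \<Rightarrow> real"
  assumes l: "l \<in> borel_measurable borel" and g: "g \<in> borel_measurable borel"
    and g_bounded: "\<And>x. norm x = 1 \<Longrightarrow> \<bar>g x\<bar> \<le> 1"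
  shows "integrable unif_sphere (\<lambda>x. h (l x) * g x)"
proof (rule integrable_unif_sphere_bounded[where B=1])
  fix x :: "real^'n" assume "norm x = 1"
  then show "\<bar>h (l x) * g x\<bar> \<le> 1"
    using h_bounded[of "l x"] g_bounded by (auto simp: abs_mult intro: mult_le_one)
qed (intro borel_measurable_times measurable_compose[OF l h_measurable] g)

lemma integrable_weighted_monomial:
  "integrable unif_sphere (\<lambda>x::real^'n. h (x $ k) * ((x $ i)^a * (x $ j)^c))"
proof -
  have "\<bar>(x $ i)^a * (x $ j)^c\<bar> \<le> 1" if "norm x = 1" for x :: "real^'n"
    using that by (auto simp: abs_mult power_abs abs_component_le_1 intro!: mult_le_one power_le_one)
  moreover have "(\<lambda>x::real^'n. x $ k) \<in> borel_measurable borel"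
    by measurable
  moreover have "(\<lambda>x::real^'n. (x $ i)^a * (x $ j)^c) \<in> borel_measurable borel"
    by measurable
  ultimately show ?thesis
    using integrable_weighted[of "\<lambda>x. x $ k" "\<lambda>x. (x $ i)^a * (x $ j)^c"] by simp
qed

lemma integrable_weighted_inner:
  fixes w :: "real^'n" and g :: "real^'n \<Rightarrow> real"
  assumes "g \<in> borel_measurable borel" and "\<And>x. norm x = 1 \<Longrightarrow> \<bar>g x\<bar> \<le> 1"
  shows "integrable unif_sphere (\<lambda>x. h (x \<bullet> w) * g x)"
proof -
  have "(\<lambda>x::real^'n. x \<bullet> w) \<in> borel_measurable borel"
    by measurable
  then show ?thesis
    using integrable_weighted[of "\<lambda>x. x \<bullet> w" g] assms by simp
qed

lemma integral_weighted_inner_power: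
  fixes w v :: "real^'n" and j k :: 'n
  assumes "norm w = 1" "norm v = 1" "w \<bullet> v = 0" "j \<noteq> k"
  shows "(\<integral>x. h (x \<bullet> w) * (x \<bullet> v)^m \<partial>unif_sphere) = (\<integral>x. h (x $ k) * (x $ j)^m \<partial>unif_sphere)"
proof -
  have "(\<lambda>(s, t). h s * t^m) \<in> borel_measurable borel"
    unfolding borel_prod[symmetric] by measurable
  then show ?thesis
    using integral_unif_sphere_inner_orthonormal[of "\<lambda>s t. h s * t^m" w v j k] assms by simp
qed

lemma integral_weighted_inner_square:
  fixes w v :: "real^'n"
  assumes w: "norm w = 1" and v: "norm v = 1" and wv: "w \<bullet> v = 0"
  shows "(real CARD('n) - 1) * (\<integral>x. h (x \<bullet> w) * (x \<bullet> v)^2 \<partial>unif_sphere)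
       = (\<integral>x. h (x \<bullet> w) * (1 - (x \<bullet> w)^2) \<partial>unif_sphere)"
proof -
  obtain k :: 'n where True by blast
  let ?K = "UNIV - {k}"
  have "(real CARD('n) - 1) * (\<integral>x. h (x \<bullet> w) * (x \<bullet> v)^2 \<partial>unif_sphere)
      = (\<Sum>j\<in>?K. \<integral>x. h (x \<bullet> w) * (x \<bullet> v)^2 \<partial>unif_sphere)"
    by (simp add: card_Diff_singleton of_nat_diff)
  also have "\<dots> = (\<Sum>j\<in>?K. \<integral>x. h (x $ k) * (x $ j)^2 \<partial>unif_sphere)"
    by (intro sum.cong refl integral_weighted_inner_power[OF w v wv]) auto
  also have "\<dots> = (\<integral>x. (\<Sum>j\<in>?K. h (x $ k) * (x $ j)^2) \<partial>unif_sphere)"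
    using integrable_weighted_monomial[of k _ 0 _ 2] by (simp add: Bochner_Integration.integral_sum)
  also have "\<dots> = (\<integral>x. h (x $ k) * (1 - (x $ k)^2) \<partial>unif_sphere)"
    using AE_unif_sphere_norm
    by (intro integral_cong_AE) (auto elim!: eventually_mono
        simp: sum_distrib_left[symmetric] sum_power2_components_remove)
  also have "\<dots> = (\<integral>x. h (x \<bullet> w) * (1 - (x \<bullet> w)^2) \<partial>unif_sphere)"
    using w by (intro integral_unif_sphere_inner[symmetric]) measurable
  finally show ?thesis .
qed


text \<open>Averaging over the two diagonals \<open>(e\<^sub>i \<plusminus> e\<^sub>j)/\<surd>2\<close> cancels the odd terms of
  the binomial expansion.\<close>
lemma integral_weighted_coord_mixed:
  fixes i j k :: "'n::finite"
  assumes ij: "i \<noteq> j" and ik: "i \<noteq> k" and jk: "j \<noteq> k"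
  shows "(\<integral>x. h (x $ k) * ((x $ i)^2 * (x $ j)^2) \<partial>unif_sphere)
       = (\<integral>x. h (x $ k) * (x $ j)^4 \<partial>unif_sphere) / 3"
proof -
  define q q' :: "real^'n"
    where "q = (1 / sqrt 2) *\<^sub>R (axis i 1 + axis j 1)" and "q' = (1 / sqrt 2) *\<^sub>R (axis i 1 - axis j 1)"
  have xq: "x \<bullet> q = (x $ i + x $ j) / sqrt 2" "x \<bullet> q' = (x $ i - x $ j) / sqrt 2" for x :: "real^'n"
    by (simp_all add: q_def q'_def inner_add_right inner_diff_right inner_axis)
  have "q \<bullet> q = 1" "q' \<bullet> q' = 1"
    using ij by (simp_all add: q_def q'_def inner_add_left inner_add_right inner_diff_left inner_diff_right
        inner_axis_axis)
  then have q: "norm q = 1" "norm q' = 1"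
    by (simp_all add: norm_eq_sqrt_inner)
  have kq: "axis k 1 \<bullet> q = 0" "axis k 1 \<bullet> q' = 0"
    using ik jk by (simp_all add: q_def q'_def inner_add_right inner_diff_right inner_axis_axis)
  have ki: "axis k 1 \<bullet> axis i (1::real) = 0"
    using ik by (simp add: inner_axis_axis)
  define Q where "Q = (\<integral>x. h (x $ k) * (x $ j)^4 \<partial>unif_sphere)"
  have Qq: "(\<integral>x. h (x $ k) * (x \<bullet> p)^4 \<partial>unif_sphere) = Q" if "norm p = 1" "axis k 1 \<bullet> p = 0" for p
    using integral_weighted_inner_power[OF norm_axis_1 that jk, of 4] by (simp add: Q_def inner_axis)
  have Qi: "(\<integral>x. h (x $ k) * (x $ i)^4 \<partial>unif_sphere) = Q"
    using Qq[OF norm_axis_1 ki] by (simp add: inner_axis)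
  have int4: "integrable unif_sphere (\<lambda>x. h (x $ k) * (x \<bullet> p)^4)" if "norm p = 1" for p
  proof -
    have "\<bar>(x \<bullet> p)^4\<bar> \<le> 1" if "norm x = 1" for x :: "real^'n"
    proof -
      have "\<bar>x \<bullet> p\<bar> ^ 4 \<le> 1"
        using that \<open>norm p = 1\<close> abs_inner_le_1 by (intro power_le_one) auto
      then show ?thesis
        by (simp add: power_abs)
    qed
    moreover have "(\<lambda>x::real^'n. x $ k) \<in> borel_measurable borel"
      by measurable
    moreover have "(\<lambda>x::real^'n. (x \<bullet> p)^4) \<in> borel_measurable borel"
      by measurable
    ultimately show ?thesis
      using integrable_weighted[of "\<lambda>x. x $ k" "\<lambda>x. (x \<bullet> p)^4"] by simp
  qed
  have "2 * Q = (\<integral>x. h (x $ k) * (x \<bullet> q)^4 + h (x $ k) * (x \<bullet> q')^4 \<partial>unif_sphere)"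
    using Qq[OF q(1) kq(1)] Qq[OF q(2) kq(2)] int4[OF q(1)] int4[OF q(2)] by simp
  also have "\<dots> = (\<integral>x. h (x $ k) * (x $ i)^4 / 2 + 3 * (h (x $ k) * ((x $ i)^2 * (x $ j)^2))
      + h (x $ k) * (x $ j)^4 / 2 \<partial>unif_sphere)"
    by (intro Bochner_Integration.integral_cong refl)
      (simp add: xq power_divide field_simps power2_eq_square power3_eq_cube power4_eq_xxxx)
  also have "\<dots> = Q / 2 + 3 * (\<integral>x. h (x $ k) * ((x $ i)^2 * (x $ j)^2) \<partial>unif_sphere) + Q / 2"
    using integrable_weighted_monomial[of k i 4 j 0] integrable_weighted_monomial[of k i 2 j 2]
      integrable_weighted_monomial[of k i 0 j 4] by (simp add: Qi Q_def)
  finally show ?thesis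
    unfolding Q_def by simp
qed


lemma integral_weighted_inner_fourth:
  fixes w v :: "real^'n"
  assumes w: "norm w = 1" and v: "norm v = 1" and wv: "w \<bullet> v = 0"
  shows "(real CARD('n) - 1) * (real CARD('n) + 1) / 3 * (\<integral>x. h (x \<bullet> w) * (x \<bullet> v)^4 \<partial>unif_sphere)
       = (\<integral>x. h (x \<bullet> w) * (1 - (x \<bullet> w)^2)^2 \<partial>unif_sphere)"
proof -
  obtain k :: 'n where True by blast
  let ?K = "UNIV - {k}"
  define Q where "Q = (\<integral>x. h (x \<bullet> w) * (x \<bullet> v)^4 \<partial>unif_sphere)"
  have Q: "(\<integral>x. h (x $ k) * (x $ j)^4 \<partial>unif_sphere) = Q" if "j \<in> ?K" for j
    unfolding Q_def using integral_weighted_inner_power[OF w v wv, of j k 4] that by simp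
  have entry: "(\<integral>x. h (x $ k) * ((x $ i)^2 * (x $ j)^2) \<partial>unif_sphere) = (if i = j then Q else Q / 3)"
    if "i \<in> ?K" "j \<in> ?K" for i j
    using that Q[of j] integral_weighted_coord_mixed[of i j k]
    by (auto simp: power2_eq_square power4_eq_xxxx mult.assoc)
  have row: "(\<Sum>j\<in>?K. if i = j then Q else Q / 3) = real (card ?K) * Q / 3 + 2 * Q / 3"
    if "i \<in> ?K" for i
  proof -
    have "(\<Sum>j\<in>?K. if i = j then Q else Q / 3) = (\<Sum>j\<in>?K. Q / 3 + (if i = j then 2 * Q / 3 else 0))"
      by (intro sum.cong) auto
    then show ?thesis
      using that by (simp add: sum.distrib)
  qed
  have "(\<integral>x. h (x \<bullet> w) * (1 - (x \<bullet> w)^2)^2 \<partial>unif_sphere)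
      = (\<integral>x. h (x $ k) * (1 - (x $ k)^2)^2 \<partial>unif_sphere)"
    using w by (intro integral_unif_sphere_inner) measurable
  also have "\<dots> = (\<integral>x. (\<Sum>i\<in>?K. \<Sum>j\<in>?K. h (x $ k) * ((x $ i)^2 * (x $ j)^2)) \<partial>unif_sphere)"
  proof (intro integral_cong_AE)
    show "AE x in unif_sphere. h (x $ k) * (1 - (x $ k)^2)^2
        = (\<Sum>i\<in>?K. \<Sum>j\<in>?K. h (x $ k) * ((x $ i)^2 * (x $ j)^2))"
      using AE_unif_sphere_norm
    proof eventually_elim
      case (elim x)
      have "(\<Sum>i\<in>?K. \<Sum>j\<in>?K. h (x $ k) * ((x $ i)^2 * (x $ j)^2))
          = h (x $ k) * ((\<Sum>i\<in>?K. (x $ i)^2) * (\<Sum>j\<in>?K. (x $ j)^2))"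
        unfolding sum_product by (simp only: sum_distrib_left)
      with elim show ?case
        by (simp add: sum_power2_components_remove power2_eq_square[of "1 - _"])
    qed
  qed measurable
  also have "\<dots> = (\<Sum>i\<in>?K. \<Sum>j\<in>?K. \<integral>x. h (x $ k) * ((x $ i)^2 * (x $ j)^2) \<partial>unif_sphere)"
    by (simp add: Bochner_Integration.integral_sum integrable_weighted_monomial)
  also have "\<dots> = (\<Sum>i\<in>?K. \<Sum>j\<in>?K. if i = j then Q else Q / 3)"
    using entry by (intro sum.cong) auto
  also have "\<dots> = (\<Sum>i\<in>?K. real (card ?K) * Q / 3 + 2 * Q / 3)"
    using row by (intro sum.cong) auto
  also have "\<dots> = (real CARD('n) - 1) * (real CARD('n) + 1) / 3 * Q"
    by (simp add: card_Diff_singleton of_nat_diff field_simps)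
  finally show ?thesis
    unfolding Q_def ..
qed


lemma integral_weighted_inner_square_ge:
  fixes w v :: "real^'n"
  assumes w: "norm w = 1" and v: "norm v = 1" and wv: "w \<bullet> v = 0"
    and h_nonneg: "\<And>t. 0 \<le> h t" and h_small: "\<And>t. h t \<noteq> 0 \<Longrightarrow> \<bar>t\<bar> \<le> 1/4"
  shows "15 * (\<integral>x. h (x \<bullet> w) \<partial>unif_sphere)
       \<le> 16 * (real CARD('n) - 1) * (\<integral>x. h (x \<bullet> w) * (x \<bullet> v)^2 \<partial>unif_sphere)"
proof -
  have "15 / 16 * h t \<le> h t * (1 - t^2)" for t
  proof (cases "h t = 0")
    case False
    then have "t^2 \<le> (1/4)^2"
      using h_small power_mono[of "\<bar>t\<bar>" "1/4" 2] by simp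
    then have "15 / 16 \<le> 1 - t^2"
      by (simp add: power2_eq_square)
    from mult_left_mono[OF this h_nonneg[of t]] show ?thesis
      by linarith
  qed simp
  moreover have "\<bar>1 - (x \<bullet> w)^2\<bar> \<le> 1" if "norm x = 1" for x
    using abs_inner_le_1[OF that w] by (simp add: abs_square_le_1)
  ultimately have "(\<integral>x. h (x \<bullet> w) * (15 / 16) \<partial>unif_sphere) \<le> (\<integral>x. h (x \<bullet> w) * (1 - (x \<bullet> w)^2) \<partial>unif_sphere)"
    by (intro integral_mono integrable_weighted_inner) (auto simp: mult.commute)
  then have "15 * (\<integral>x. h (x \<bullet> w) \<partial>unif_sphere) \<le> 16 * (\<integral>x. h (x \<bullet> w) * (1 - (x \<bullet> w)^2) \<partial>unif_sphere)"
    by simp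
  also have "\<dots> = 16 * (real CARD('n) - 1) * (\<integral>x. h (x \<bullet> w) * (x \<bullet> v)^2 \<partial>unif_sphere)"
    by (simp only: integral_weighted_inner_square[OF w v wv, symmetric] mult.assoc)
  finally show ?thesis .
qed


lemma integral_weighted_inner_fourth_le:
  fixes w v :: "real^'n"
  assumes w: "norm w = 1" and v: "norm v = 1" and wv: "w \<bullet> v = 0"
    and h_nonneg: "\<And>t. 0 \<le> h t" and h_small: "\<And>t. h t \<noteq> 0 \<Longrightarrow> \<bar>t\<bar> \<le> 1/4"
  shows "(real CARD('n) - 1) * (real CARD('n) + 1) * (\<integral>x. h (x \<bullet> w) * (x \<bullet> v)^4 \<partial>unif_sphere)
       \<le> 3 * (\<integral>x. h (x \<bullet> w) \<partial>unif_sphere)"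
proof -
  have "h t * (1 - t^2)^2 \<le> h t * 1" for t
  proof (cases "h t = 0")
    case False
    then have "\<bar>t\<bar> \<le> 1"
      using h_small by force
    then have "t^2 \<le> 1"
      by (simp add: abs_square_le_1)
    then have "(1 - t^2)^2 \<le> 1"
      by (simp add: power_le_one)
    then show ?thesis
      using h_nonneg by (rule mult_left_mono)
  qed simp
  moreover have "\<bar>(1 - (x \<bullet> w)^2)^2\<bar> \<le> 1" if "norm x = 1" for x
    using abs_inner_le_1[OF that w] by (simp add: abs_square_le_1 power_le_one)
  ultimately have "(\<integral>x. h (x \<bullet> w) * (1 - (x \<bullet> w)^2)^2 \<partial>unif_sphere) \<le> (\<integral>x. h (x \<bullet> w) * 1 \<partial>unif_sphere)"
    by (intro integral_mono integrable_weighted_inner) auto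
  then show ?thesis
    using integral_weighted_inner_fourth[OF w v wv] by simp
qed

lemma integral_weighted_abs_inner_ge:
  fixes w v :: "real^'n"
  assumes w: "norm w = 1" and v: "norm v = 1" and wv: "w \<bullet> v = 0" and d: "2 \<le> CARD('n)"
    and h_nonneg: "\<And>t. 0 \<le> h t" and h_small: "\<And>t. h t \<noteq> 0 \<Longrightarrow> \<bar>t\<bar> \<le> 1/4"
  shows "(\<integral>x. h (x \<bullet> w) \<partial>unif_sphere) / (3 * sqrt (real CARD('n)))
       \<le> (\<integral>x. h (x \<bullet> w) * \<bar>x \<bullet> v\<bar> \<partial>unif_sphere)"
proof -
  define d where "d = real CARD('n)"
  define c where "c = sqrt d"
  define P where "P = (\<integral>x. h (x \<bullet> w) \<partial>unif_sphere)"
  define m2 where "m2 = (\<integral>x. h (x \<bullet> w) * (x \<bullet> v)^2 \<partial>unif_sphere)"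
  define m4 where "m4 = (\<integral>x. h (x \<bullet> w) * (x \<bullet> v)^4 \<partial>unif_sphere)"
  have d2: "2 \<le> d" and c: "0 < c" "c^2 = d"
    using d by (simp_all add: d_def c_def)
  have P: "0 \<le> P"
    unfolding P_def using h_nonneg by (intro integral_nonneg_AE) auto
  have vbound: "\<bar>(x \<bullet> v)^k\<bar> \<le> 1" if "norm x = 1" for x k
    using abs_inner_le_1[OF that v] by (simp add: power_abs power_le_one)
  have int_power: "integrable unif_sphere (\<lambda>x. h (x \<bullet> w) * (x \<bullet> v)^k)" for k
    using vbound by (intro integrable_weighted_inner) auto
  then have "c / 2 * m2 - c^3 / 32 * m4
      = (\<integral>x. c / 2 * (h (x \<bullet> w) * (x \<bullet> v)^2) - c^3 / 32 * (h (x \<bullet> w) * (x \<bullet> v)^4) \<partial>unif_sphere)"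
    by (simp add: m2_def m4_def)
  also have "\<dots> \<le> (\<integral>x. h (x \<bullet> w) * \<bar>x \<bullet> v\<bar> \<partial>unif_sphere)"
  proof (rule integral_mono)
    show "integrable unif_sphere (\<lambda>x. h (x \<bullet> w) * \<bar>x \<bullet> v\<bar>)"
      using abs_inner_le_1[OF _ v] by (intro integrable_weighted_inner) auto
    fix x :: "real^'n"
    have "h (x \<bullet> w) * (c / 2 * (x \<bullet> v)^2 - c^3 / 32 * (x \<bullet> v)^4) \<le> h (x \<bullet> w) * \<bar>x \<bullet> v\<bar>"
      using abs_ge_quadratic_minus_quartic[OF c(1)] h_nonneg by (rule mult_left_mono)
    then show "c / 2 * (h (x \<bullet> w) * (x \<bullet> v)^2) - c^3 / 32 * (h (x \<bullet> w) * (x \<bullet> v)^4)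
        \<le> h (x \<bullet> w) * \<bar>x \<bullet> v\<bar>"
      by (simp add: algebra_simps)
  qed (use int_power in simp)
  finally have ms: "c / 2 * m2 - c^3 / 32 * m4 \<le> (\<integral>x. h (x \<bullet> w) * \<bar>x \<bullet> v\<bar> \<partial>unif_sphere)" .
  have "P / 3 \<le> d * (m2 / 2 - d * m4 / 32)"
    using d2 P integral_weighted_inner_square_ge[OF w v wv h_nonneg h_small]
      integral_weighted_inner_fourth_le[OF w v wv h_nonneg h_small]
    by (intro moment_combination_bound) (simp_all add: P_def m2_def m4_def d_def)
  then have "P / 3 \<le> c^2 * (m2 / 2 - d * m4 / 32)"
    using c by simp
  then have "P / (3 * c) \<le> c * (m2 / 2 - d * m4 / 32)"
    using c by (simp add: field_simps power2_eq_square)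
  also have "\<dots> = c / 2 * m2 - c^3 / 32 * m4"
    using c by (simp add: power3_eq_cube power2_eq_square algebra_simps)
  finally show ?thesis
    using ms by (simp add: P_def c_def d_def)
qed

end


lemma integral_unif_sphere_flip:
  fixes w v :: "real^'n" and G :: "real \<Rightarrow> real \<Rightarrow> real"
  assumes "(\<lambda>(s, t). G s t) \<in> borel_measurable borel" and "norm v = 1" and "w \<bullet> v = 0"
  shows "(\<integral>x. G (x \<bullet> w) (x \<bullet> v) \<partial>unif_sphere) = (\<integral>x. G (x \<bullet> w) (- (x \<bullet> v)) \<partial>unif_sphere)"
  using integral_unif_sphere_inner_pair[where G=G and p=w and q=v and p'=w and q'="- v"] assms
  by simp

definition update_gain :: "real^'n \<Rightarrow> real^'n \<Rightarrow> real \<Rightarrow> real^'n \<Rightarrow> real" where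
  "update_gain w u b x = indicator {b/2..b} (x \<bullet> w) * (- 2 * (x \<bullet> w) * (x \<bullet> u))"

lemma borel_measurable_update_gain [measurable]: "update_gain w u b \<in> borel_measurable borel"
  unfolding update_gain_def by measurable

lemma abs_update_gain_le:
  assumes "norm x = 1" "norm w = 1" "norm u = 1"
  shows "\<bar>update_gain w u b x\<bar> \<le> 2"
proof -
  have "\<bar>update_gain w u b x\<bar> \<le> 2 * (\<bar>x \<bullet> w\<bar> * \<bar>x \<bullet> u\<bar>)"
    by (simp add: update_gain_def abs_mult split: split_indicator)
  also have "\<dots> \<le> 2 * (1 * 1)"
    using abs_inner_le_1 assms by (intro mult_left_mono mult_mono) auto
  finally show ?thesis
    by simp
qed

lemma integral_update_gain_ge:
  fixes w v u :: "real^'n"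
  assumes w: "norm w = 1" and v: "norm v = 1" and wv: "w \<bullet> v = 0" and u1: "norm u = 1"
    and u: "u = \<alpha> *\<^sub>R w + \<beta> *\<^sub>R v" and \<alpha>: "\<bar>\<alpha>\<bar> \<le> 1" and b: "0 < b"
  shows "- 2 * b^2 * (\<integral>x. indicator {b/2..b} (x \<bullet> w) \<partial>unif_sphere)
       \<le> (\<integral>x. update_gain w u b x \<partial>unif_sphere)"
proof -
  let ?h = "indicator {b/2..b} :: real \<Rightarrow> real"
  define I where "I = (\<integral>x. ?h (x \<bullet> w) * (x \<bullet> w) * (x \<bullet> v) \<partial>unif_sphere)"
  have "(\<lambda>(s, t). ?h s * s * t) \<in> borel_measurable borel"
    unfolding borel_prod[symmetric] by measurable
  from integral_unif_sphere_flip[OF this v wv] have "I = - I"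
    by (simp add: I_def)
  then have I: "I = 0"
    by simp
  have "\<bar>?h (x \<bullet> w) * (x \<bullet> w) * (x \<bullet> v)\<bar> \<le> 1" if "norm x = 1" for x
  proof -
    have "\<bar>?h (x \<bullet> w) * (x \<bullet> w) * (x \<bullet> v)\<bar> \<le> \<bar>x \<bullet> w\<bar> * \<bar>x \<bullet> v\<bar>"
      by (simp add: abs_mult split: split_indicator)
    also have "\<dots> \<le> 1"
      using abs_inner_le_1[OF that w] abs_inner_le_1[OF that v] by (intro mult_le_one) auto
    finally show ?thesis .
  qed
  then have int_I: "integrable unif_sphere (\<lambda>x. ?h (x \<bullet> w) * (x \<bullet> w) * (x \<bullet> v))"
    by (intro integrable_unif_sphere_bounded[where B=1]) auto
  have int_h: "integrable unif_sphere (\<lambda>x. ?h (x \<bullet> w))"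
    by (intro integrable_unif_sphere_bounded[where B=1]) (auto split: split_indicator)
  have int_gain: "integrable unif_sphere (update_gain w u b)"
    using abs_update_gain_le[OF _ w u1] by (intro integrable_unif_sphere_bounded[where B=2]) auto
  have "- 2 * b^2 * ?h (x \<bullet> w) - 2 * \<beta> * (?h (x \<bullet> w) * (x \<bullet> w) * (x \<bullet> v)) \<le> update_gain w u b x" for x
  proof (cases "x \<bullet> w \<in> {b/2..b}")
    case True
    then have "0 \<le> x \<bullet> w" "x \<bullet> w \<le> b"
      using b by auto
    then have "(x \<bullet> w)^2 \<le> b^2"
      by (auto intro: power_mono)
    moreover have "\<alpha> * (x \<bullet> w)^2 \<le> \<bar>\<alpha>\<bar> * (x \<bullet> w)^2"
      by (intro mult_right_mono) auto
    moreover have "\<bar>\<alpha>\<bar> * (x \<bullet> w)^2 \<le> (x \<bullet> w)^2"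
      using \<alpha> by (intro mult_left_le_one_le) auto
    ultimately show ?thesis
      using True by (simp add: update_gain_def u inner_add_right algebra_simps power2_eq_square)
  qed (simp add: update_gain_def)
  then have "(\<integral>x. - 2 * b^2 * ?h (x \<bullet> w) - 2 * \<beta> * (?h (x \<bullet> w) * (x \<bullet> w) * (x \<bullet> v)) \<partial>unif_sphere)
      \<le> (\<integral>x. update_gain w u b x \<partial>unif_sphere)"
    using int_I int_h int_gain by (intro integral_mono) auto
  then show ?thesis
    using int_I int_h I by (simp add: I_def)
qed


lemma gain_pos_part_ge:
  fixes a b s \<alpha> \<beta> :: real
  assumes b: "0 < b" and a: "b/2 \<le> a" "a \<le> b" and \<alpha>: "\<bar>\<alpha>\<bar> \<le> 1" and \<beta>: "0 \<le> \<beta>"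
  shows "b * (\<beta> * max (- s) 0 - b) \<le> max (- 2 * a * (\<alpha> * a + \<beta> * s)) 0"
proof -
  define X where "X = - (\<alpha> * a + \<beta> * s)"
  have "\<alpha> * a \<le> \<bar>\<alpha>\<bar> * a"
    using a b by (intro mult_right_mono) auto
  also have "\<dots> \<le> a"
    using \<alpha> a b by (intro mult_left_le_one_le) auto
  also have "\<dots> \<le> b"
    using a by simp
  finally have "\<beta> * max (- s) 0 - b \<le> max X 0"
    using b by (cases "0 \<le> s") (auto simp: X_def)
  then have "b * (\<beta> * max (- s) 0 - b) \<le> b * max X 0"
    using b by (intro mult_left_mono) auto
  also have "\<dots> \<le> (2 * a) * max X 0"
    using a by (intro mult_right_mono) auto
  also have "\<dots> = max (2 * a * X) 0"
    using a b by (cases "0 \<le> X") (auto simp: max_def zero_le_mult_iff mult_le_0_iff)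
  finally show ?thesis
    by (simp add: X_def algebra_simps)
qed

lemma integral_pos_update_gain_ge:
  fixes w v u :: "real^'n"
  assumes w: "norm w = 1" and v: "norm v = 1" and wv: "w \<bullet> v = 0" and u1: "norm u = 1"
    and u: "u = \<alpha> *\<^sub>R w + \<beta> *\<^sub>R v" and \<alpha>: "\<bar>\<alpha>\<bar> \<le> 1" and \<beta>: "0 \<le> \<beta>"
    and b: "0 < b" "b \<le> 1/4" and d: "2 \<le> CARD('n)"
  shows "b * \<beta> * (\<integral>x. indicator {b/2..b} (x \<bullet> w) \<partial>unif_sphere) / (6 * sqrt (real CARD('n)))
       - b^2 * (\<integral>x. indicator {b/2..b} (x \<bullet> w) \<partial>unif_sphere)
       \<le> (\<integral>x. max (update_gain w u b x) 0 \<partial>unif_sphere)"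
proof -
  let ?h = "indicator {b/2..b} :: real \<Rightarrow> real"
  define P where "P = (\<integral>x. ?h (x \<bullet> w) \<partial>unif_sphere)"
  define m where "m = (\<integral>x. ?h (x \<bullet> w) * max (- (x \<bullet> v)) 0 \<partial>unif_sphere)"
  have bounded: "\<bar>?h (x \<bullet> w) * F (x \<bullet> v)\<bar> \<le> 1" if "norm x = 1" "\<And>t. \<bar>t\<bar> \<le> 1 \<Longrightarrow> \<bar>F t\<bar> \<le> 1" for x F
    using that abs_inner_le_1[OF that(1) v] by (auto simp: abs_mult split: split_indicator)
  have int: "integrable unif_sphere (\<lambda>x. ?h (x \<bullet> w) * F (x \<bullet> v))"
    if "F \<in> borel_measurable borel" "\<And>t. \<bar>t\<bar> \<le> 1 \<Longrightarrow> \<bar>F t\<bar> \<le> 1" for F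
    using that bounded by (intro integrable_unif_sphere_bounded[where B=1]) auto
  have "(\<lambda>(s, t). ?h s * max (- t) 0) \<in> borel_measurable borel"
    unfolding borel_prod[symmetric] by measurable
  from integral_unif_sphere_flip[OF this v wv]
  have "m = (\<integral>x. ?h (x \<bullet> w) * max (x \<bullet> v) 0 \<partial>unif_sphere)"
    by (simp add: m_def)
  then have "2 * m = (\<integral>x. ?h (x \<bullet> w) * max (- (x \<bullet> v)) 0 + ?h (x \<bullet> w) * max (x \<bullet> v) 0 \<partial>unif_sphere)"
    using int[of "\<lambda>t. max (- t) 0"] int[of "\<lambda>t. max t 0"] by (simp add: m_def)
  also have "\<dots> = (\<integral>x. indicator {b/2..b} (x \<bullet> w) * \<bar>x \<bullet> v\<bar> \<partial>unif_sphere)"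
    by (intro Bochner_Integration.integral_cong) (auto simp: max_def)
  also have "\<dots> \<ge> P / (3 * sqrt (real CARD('n)))"
    unfolding P_def using w v wv d b
    by (intro integral_weighted_abs_inner_ge) (auto split: split_indicator split_indicator_asm)
  finally have m: "P / (6 * sqrt (real CARD('n))) \<le> m"
    by simp
  have "b * \<beta> * m - b^2 * P = (\<integral>x. b * \<beta> * (?h (x \<bullet> w) * max (- (x \<bullet> v)) 0) - b^2 * ?h (x \<bullet> w) \<partial>unif_sphere)"
    using int[of "\<lambda>t. max (- t) 0"] int[of "\<lambda>t. 1"] by (simp add: m_def P_def)
  also have "\<dots> \<le> (\<integral>x. max (update_gain w u b x) 0 \<partial>unif_sphere)"
  proof (rule integral_mono)
    have "\<bar>max (update_gain w u b x) 0\<bar> \<le> 2" if "norm x = 1" for x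
      using abs_update_gain_le[OF that w u1, of b] by (auto simp: max_def)
    then show "integrable unif_sphere (\<lambda>x. max (update_gain w u b x) 0)"
      by (intro integrable_unif_sphere_bounded[where B=2]) auto
    fix x :: "real^'n"
    show "b * \<beta> * (?h (x \<bullet> w) * max (- (x \<bullet> v)) 0) - b^2 * ?h (x \<bullet> w) \<le> max (update_gain w u b x) 0"
    proof (cases "x \<bullet> w \<in> {b/2..b}")
      case True
      then have "b * (\<beta> * max (- (x \<bullet> v)) 0 - b)
          \<le> max (- 2 * (x \<bullet> w) * (\<alpha> * (x \<bullet> w) + \<beta> * (x \<bullet> v))) 0"
        using b \<alpha> \<beta> by (intro gain_pos_part_ge) auto
      then show ?thesis
        using True by (simp add: update_gain_def u inner_add_right algebra_simps power2_eq_square)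
    qed (simp add: update_gain_def)
  qed (use int[of "\<lambda>t. max (- t) 0"] int[of "\<lambda>t. 1"] in simp)
  finally show ?thesis
    using m b \<beta> mult_left_mono[OF m, of "b * \<beta>"] by (simp add: P_def)
qed


lemma integral_update_gain_noisy_ge:
  fixes w v u :: "real^'n"
  assumes w: "norm w = 1" and v: "norm v = 1" and wv: "w \<bullet> v = 0" and u1: "norm u = 1"
    and u: "u = \<alpha> *\<^sub>R w + \<beta> *\<^sub>R v" and \<alpha>: "\<bar>\<alpha>\<bar> \<le> 1" and \<beta>: "0 \<le> \<beta>"
    and b: "0 < b" "b \<le> 1/4" and d: "2 \<le> CARD('n)" and \<eta>: "0 \<le> \<eta>" "\<eta> \<le> 1/2"
  shows "((1 - 2 * \<eta>) * b * \<beta> / (6 * sqrt (real CARD('n))) - b^2) * (\<integral>x. indicator {b/2..b} (x \<bullet> w) \<partial>unif_sphere)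
       \<le> (1 - \<eta>) * (\<integral>x. max (update_gain w u b x) 0 \<partial>unif_sphere)
         - \<eta> * (\<integral>x. max (- update_gain w u b x) 0 \<partial>unif_sphere)"
proof -
  define P where "P = (\<integral>x. indicator {b/2..b} (x \<bullet> w) \<partial>unif_sphere :: real)"
  define g where "g = update_gain w u b"
  have bounded: "\<bar>max (g x) 0\<bar> \<le> 2" "\<bar>max (- g x) 0\<bar> \<le> 2" if "norm x = 1" for x
    using abs_update_gain_le[OF that w u1, of b] by (auto simp: g_def max_def)
  have "(\<integral>x. max (g x) 0 \<partial>unif_sphere) - (\<integral>x. max (- g x) 0 \<partial>unif_sphere)
      = (\<integral>x. max (g x) 0 - max (- g x) 0 \<partial>unif_sphere)"
    using bounded by (intro Bochner_Integration.integral_diff[symmetric] integrable_unif_sphere_bounded)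
      (auto simp: g_def)
  also have "\<dots> = integral\<^sup>L unif_sphere g"
    by (intro Bochner_Integration.integral_cong) (auto simp: max_def)
  finally have "(1 - \<eta>) * (\<integral>x. max (g x) 0 \<partial>unif_sphere) - \<eta> * (\<integral>x. max (- g x) 0 \<partial>unif_sphere)
      = (1 - 2 * \<eta>) * (\<integral>x. max (g x) 0 \<partial>unif_sphere) + \<eta> * integral\<^sup>L unif_sphere g"
    by (simp add: algebra_simps)
  moreover have "(1 - 2 * \<eta>) * (b * \<beta> * P / (6 * sqrt (real CARD('n))) - b^2 * P)
      \<le> (1 - 2 * \<eta>) * (\<integral>x. max (g x) 0 \<partial>unif_sphere)"
    using integral_pos_update_gain_ge[OF w v wv u1 u \<alpha> \<beta> b d] \<eta>
    by (intro mult_left_mono) (auto simp: P_def g_def)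
  moreover have "\<eta> * (- 2 * b^2 * P) \<le> \<eta> * integral\<^sup>L unif_sphere g"
    using integral_update_gain_ge[OF w v wv u1 u \<alpha> b(1)] \<eta>
    by (intro mult_left_mono) (auto simp: P_def g_def)
  ultimately show ?thesis
    by (simp add: P_def g_def algebra_simps)
qed


text \<open>Outside \<open>[-1, 1]\<close>, \<open>arccos\<close> is the value of \<open>THE\<close> on an unsatisfiable predicate,
  hence the same for all such arguments.\<close>
lemma cos_arccos_eq: "cos (arccos t) = (if \<bar>t\<bar> \<le> 1 then t else cos (arccos 2))"
proof (cases "\<bar>t\<bar> \<le> 1")
  case False
  have "(\<lambda>x. 0 \<le> x \<and> x \<le> pi \<and> cos x = t) = (\<lambda>x. 0 \<le> x \<and> x \<le> pi \<and> cos x = 2)"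
  proof (intro ext)
    fix x :: real
    have "cos x \<noteq> t" "cos x \<noteq> 2"
      using False cos_ge_minus_one[of x] cos_le_one[of x] by linarith+
    then show "(0 \<le> x \<and> x \<le> pi \<and> cos x = t) = (0 \<le> x \<and> x \<le> pi \<and> cos x = 2)"
      by blast
  qed
  then show ?thesis
    using False by (simp add: arccos_def)
qed (simp add: cos_arccos_abs)

lemma borel_measurable_cos_arccos [measurable]: "(\<lambda>t. cos (arccos t)) \<in> borel_measurable borel"
  by (subst cos_arccos_eq) measurable

lemma cos_vangle: "norm v1 = 1 \<Longrightarrow> norm v2 = 1 \<Longrightarrow> cos (vangle v1 v2) = v1 \<bullet> v2"
  by (simp add: vangle_def cos_arccos_abs abs_inner_le_1)

lemma update_cos_change_ge:
  fixes x w u :: "real^'n" and y b :: real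
  assumes x: "norm x = 1" and y: "y \<in> {-1, 1}" and w: "norm w = 1" and u: "norm u = 1" and b: "0 < b"
  defines "N \<equiv> indicator {(x, y). y \<noteq> sgn (u \<bullet> x)} (x, y) :: real"
  shows "(1 - N) * max (update_gain w u b x) 0 - N * max (- update_gain w u b x) 0
    \<le> indicator {b/2..b} (x \<bullet> w) *
       (cos (vangle (if y * (w \<bullet> x) < 0 then w - (2 * (w \<bullet> x)) *\<^sub>R x else w) u) - cos (vangle w u))"
proof (cases "x \<bullet> w \<in> {b/2..b}")
  case True
  define g where "g = - 2 * (x \<bullet> w) * (x \<bullet> u)"
  have pos: "0 < x \<bullet> w"
    using True b by auto
  have "cos (vangle (reflect x w) u) - cos (vangle w u) = g"
    using orthogonal_transformation_norm[OF orthogonal_transformation_reflect[OF x]] w u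
    by (simp add: cos_vangle g_def reflect_def inner_diff_left inner_diff_right inner_commute)
  moreover have "y * (w \<bullet> x) < 0 \<longleftrightarrow> y < 0"
    using y pos by (auto simp: inner_commute mult_less_0_iff)
  ultimately have change: "cos (vangle (if y * (w \<bullet> x) < 0 then w - (2 * (w \<bullet> x)) *\<^sub>R x else w) u)
      - cos (vangle w u) = (if y < 0 then g else 0)"
    by (simp add: reflect_def)
  have "(1 - N) * max g 0 - N * max (- g) 0 \<le> (if y < 0 then g else 0)"
  proof (cases "y = sgn (u \<bullet> x)")
    case True
    then have "y < 0 \<longleftrightarrow> 0 < g"
      using y pos by (auto simp: g_def inner_commute sgn_if mult_less_0_iff zero_less_mult_iff split: if_splits)
    then show ?thesis
      using True by (simp add: N_def max_def)
  next
    case False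
    then show ?thesis
      by (auto simp: N_def max_def)
  qed
  then show ?thesis
    using True change by (simp add: update_gain_def g_def)
qed (simp add: update_gain_def)


lemma integral_unif_sphere_indicator_inner:
  fixes w :: "real^'n"
  assumes "S \<in> sets borel"
  shows "(\<integral>x. indicator S (x \<bullet> w) \<partial>unif_sphere) = measure unif_sphere {x. x \<bullet> w \<in> S}"
proof -
  interpret U: prob_space "unif_sphere :: (real^'n) measure"
    by (rule prob_space_unif_sphere)
  have "(\<lambda>x. indicator S (x \<bullet> w)) = (indicator {x. x \<bullet> w \<in> S} :: real^'n \<Rightarrow> real)"
    by (auto simp: indicator_def)
  moreover have "{x. x \<bullet> w \<in> S} \<in> sets (unif_sphere :: (real^'n) measure)"
    using assms by measurable
  ultimately show ?thesis
    by simp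
qed

lemma measure_unif_sphere_pos:
  fixes S A :: "(real^'n) set"
  assumes S: "S \<in> sets borel" and A: "open A" "y \<in> A" "A \<subseteq> ball 0 1"
    and cone: "\<And>y. y \<in> A \<Longrightarrow> (1 / norm y) *\<^sub>R y \<in> S"
  shows "0 < measure unif_sphere S"
proof -
  interpret U: prob_space "unif_sphere :: (real^'n) measure"
    by (rule prob_space_unif_sphere)
  let ?V = "(\<lambda>x::real^'n. (1 / norm x) *\<^sub>R x) -` S"
  have "(\<lambda>x::real^'n. (1 / norm x) *\<^sub>R x) \<in> borel_measurable borel"
    by measurable
  from measurable_sets_borel[OF this S] have V: "?V \<in> sets borel"
    by simp
  obtain r where r: "0 < r" "ball y r \<subseteq> A"
    using A open_contains_ball by blast
  have "0 < emeasure lborel (ball y r)"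
    using content_ball_pos[OF r(1)] emeasure_lborel_ball_finite[of y r]
    by (simp add: emeasure_eq_ennreal_measure)
  also have "\<dots> \<le> emeasure lborel (ball 0 1 \<inter> ?V)"
    using r A cone V by (intro emeasure_mono) auto
  finally have "0 < emeasure lborel (ball 0 1 \<inter> ?V) / emeasure lborel (ball (0::real^'n) 1)"
    using emeasure_lborel_ball_finite[of "0::real^'n" 1] by (simp add: ennreal_zero_less_divide)
  also have "\<dots> = emeasure unif_sphere S"
    using S V by (simp add: unif_sphere_def emeasure_distr Int_absorb1)
  finally show ?thesis
    by (simp add: U.emeasure_eq_measure)
qed

lemma measure_unif_sphere_band_pos:
  fixes w v :: "real^'n"
  assumes b: "0 < b" "b \<le> 1" and w: "norm w = 1" and v: "norm v = 1" and wv: "w \<bullet> v = 0"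
  shows "0 < measure unif_sphere {x. x \<bullet> w \<in> {b/2..b}}"
proof -
  define t where "t = 3 * b / 4"
  have t: "0 < t" "t < 1"
    using b by (simp_all add: t_def)
  define y where "y = (1/2) *\<^sub>R (t *\<^sub>R w + sqrt (1 - t^2) *\<^sub>R v)"
  have "t * t < 1 * 1"
    using t by (intro mult_strict_mono) auto
  moreover have "w \<bullet> w = 1" "v \<bullet> v = 1"
    using w v by (simp_all add: dot_square_norm)
  ultimately have yw: "y \<bullet> w = t / 2" and yy: "y \<bullet> y = 1/4"
    using wv by (simp_all add: y_def inner_add_left inner_add_right inner_commute abs_square_less_1
        power2_eq_square field_simps)
  have "(norm y)^2 = y \<bullet> y"
    by (rule power2_norm_eq_inner)
  also have "\<dots> = (1/2)^2"
    using yy by (simp add: power2_eq_square)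
  finally have ny: "norm y = 1/2"
    by (simp add: power2_eq_iff_nonneg)
  show ?thesis
  proof (rule measure_unif_sphere_pos)
    show "open ({y. b/2 * norm y < y \<bullet> w} \<inter> {y. y \<bullet> w < b * norm y} \<inter> ball 0 1)"
      by (intro open_Int open_Collect_less continuous_intros open_ball)
    show "y \<in> {y. b/2 * norm y < y \<bullet> w} \<inter> {y. y \<bullet> w < b * norm y} \<inter> ball 0 1"
      using b by (simp add: ny yw t_def)
    fix z assume "z \<in> {y. b/2 * norm y < y \<bullet> w} \<inter> {y. y \<bullet> w < b * norm y} \<inter> ball (0::real^'n) 1"
    then have "b/2 * norm z < z \<bullet> w" "z \<bullet> w < b * norm z"
      by auto
    moreover from this have "0 < norm z"
      by (cases "z = 0") auto
    ultimately show "(1 / norm z) *\<^sub>R z \<in> {x. x \<bullet> w \<in> {b/2..b}}"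
      by (simp add: field_simps)
  qed (auto, measurable)
qed

lemma sin_ge_third:
  fixes y :: real
  assumes y: "0 \<le> y" "y \<le> 2"
  shows "y / 3 \<le> sin y"
proof -
  have "(\<Sum>m<3. sin_coeff m * y ^ m) = y"
    by (simp add: eval_nat_numeral sin_coeff_def)
  then have "\<bar>sin y - y\<bar> \<le> inverse (fact 3) * \<bar>y\<bar> ^ 3"
    using Maclaurin_sin_bound[of y 3] by simp
  then have "\<bar>sin y - y\<bar> \<le> y^3 / 6"
    using y by (simp add: eval_nat_numeral)
  then have "y - y^3 / 6 \<le> sin y"
    using abs_ge_minus_self[of "sin y - y"] by linarith
  moreover have "y * (y * y) \<le> y * (2 * 2)"
    using y by (intro mult_left_mono mult_mono) auto
  ultimately show ?thesis
    by (simp add: power3_eq_cube)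
qed

lemma sin_ge_twentieth:
  fixes \<theta> t :: real
  assumes \<theta>: "0 < \<theta>" "\<theta> \<le> 27/50 * pi" and t: "\<theta> / 4 \<le> t" "t \<le> 5/3 * \<theta>"
  shows "\<theta> / 20 \<le> sin t"
proof (cases "t \<le> 2")
  case True
  then show ?thesis
    using sin_ge_third[of t] \<theta> t by simp
next
  case False
  have "t \<le> 9/10 * pi"
    using t \<theta> by simp
  then have "(pi - t) / 3 \<le> sin (pi - t)"
    using False pi_approx by (intro sin_ge_third) auto
  moreover have "\<theta> / 20 \<le> (pi - t) / 3"
    using \<open>t \<le> 9/10 * pi\<close> \<theta> pi_approx by simp
  ultimately show ?thesis
    by simp
qed

lemma unit_orthogonal_decomposition:
  fixes w u :: "'a::real_inner"
  assumes w: "norm w = 1" and u: "norm u = 1" and wu: "\<bar>w \<bullet> u\<bar> < 1"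
  obtains v where "norm v = 1" "w \<bullet> v = 0" "u = (w \<bullet> u) *\<^sub>R w + sqrt (1 - (w \<bullet> u)^2) *\<^sub>R v"
proof
  define \<beta> where "\<beta> = sqrt (1 - (w \<bullet> u)^2)"
  have \<beta>: "0 < \<beta>"
    using wu by (simp add: \<beta>_def abs_square_less_1)
  define v where "v = (1 / \<beta>) *\<^sub>R (u - (w \<bullet> u) *\<^sub>R w)"
  have ww: "w \<bullet> w = 1" and uu: "u \<bullet> u = 1"
    using w u by (simp_all add: dot_square_norm)
  show "w \<bullet> v = 0"
    by (simp add: v_def inner_diff_right ww)
  have "(w \<bullet> u)^2 < 1"
    using wu by (simp add: abs_square_less_1)
  then have "\<beta>^2 = 1 - (w \<bullet> u)^2"
    by (simp add: \<beta>_def)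
  moreover have "(norm (u - (w \<bullet> u) *\<^sub>R w))^2 = 1 - (w \<bullet> u)^2"
    unfolding power2_norm_eq_inner
    by (simp add: inner_diff_left inner_diff_right ww uu inner_commute power2_eq_square)
  ultimately have "(norm (u - (w \<bullet> u) *\<^sub>R w))^2 = \<beta>^2"
    by simp
  then have "norm (u - (w \<bullet> u) *\<^sub>R w) = \<beta>"
    using \<beta> by (simp add: power2_eq_iff_nonneg)
  then show "norm v = 1"
    using \<beta> by (simp add: v_def)
  show "u = (w \<bullet> u) *\<^sub>R w + sqrt (1 - (w \<bullet> u)^2) *\<^sub>R v"
    using \<beta> by (simp add: v_def \<beta>_def[symmetric])
qed

lemma vangle_bounds_imp:
  fixes w u :: "real^'n"
  assumes w: "norm w = 1" and u: "norm u = 1"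
    and \<theta>: "0 < \<theta>" "\<theta> \<le> 27/50 * pi" and ang: "\<theta> / 4 \<le> vangle w u" "vangle w u \<le> 5/3 * \<theta>"
  shows "\<bar>w \<bullet> u\<bar> < 1" and "\<theta> / 20 \<le> sqrt (1 - (w \<bullet> u)^2)"
proof -
  have wu: "\<bar>w \<bullet> u\<bar> \<le> 1"
    using w u by (rule abs_inner_le_1)
  have "0 < arccos (w \<bullet> u)" "arccos (w \<bullet> u) < pi"
    using ang \<theta> by (simp_all add: vangle_def)
  then have "w \<bullet> u \<noteq> 1" "w \<bullet> u \<noteq> -1"
    by auto
  then show "\<bar>w \<bullet> u\<bar> < 1"
    using wu by linarith
  have "\<theta> / 20 \<le> sin (arccos (w \<bullet> u))"
    using sin_ge_twentieth[OF \<theta>] ang by (simp add: vangle_def)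
  then show "\<theta> / 20 \<le> sqrt (1 - (w \<bullet> u)^2)"
    using wu by (simp add: sin_arccos_abs)
qed

lemma drift_lower_bound_arith:
  fixes c e \<theta> \<beta> d b P I :: real
  assumes c: "0 < c" "c < 1/288" and e: "0 < e" and \<theta>: "0 < \<theta>" and \<beta>: "\<theta> / 20 \<le> \<beta>"
    and d: "0 < d" and b: "b = c * e * \<theta> / sqrt d" and P: "0 < P"
    and I: "(e * b * \<beta> / (6 * sqrt d) - b^2) * P \<le> I"
  shows "c / (100 * pi) * (e^2 * \<theta>^2) / d \<le> I / P"
proof -
  define K where "K = c * e^2 * \<theta> / d"
  have K: "0 < K"
    using c e \<theta> d by (simp add: K_def)
  have "c * \<theta> \<le> \<theta> / 288"
    using c \<theta> by simp
  moreover have "\<theta> / (100 * pi) \<le> \<theta> / 300"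
    using pi_gt3 \<theta> by (intro divide_left_mono) auto
  ultimately have "\<theta> / (100 * pi) \<le> \<beta> / 6 - c * \<theta>"
    using \<beta> \<theta> by linarith
  then have "K * (\<theta> / (100 * pi)) \<le> K * (\<beta> / 6 - c * \<theta>)"
    using K by (intro mult_left_mono) auto
  moreover have "c / (100 * pi) * (e^2 * \<theta>^2) / d = K * (\<theta> / (100 * pi))"
    using d by (simp add: K_def field_simps power2_eq_square)
  ultimately have "c / (100 * pi) * (e^2 * \<theta>^2) / d \<le> K * (\<beta> / 6 - c * \<theta>)"
    by simp
  also have "K * (\<beta> / 6 - c * \<theta>) = e * b * \<beta> / (6 * sqrt d) - b^2"
    using d by (simp add: K_def b field_simps power2_eq_square)
  also have "\<dots> \<le> I / P"
    using I P by (simp add: pos_le_divide_eq)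
  finally show ?thesis .
qed

locale sphere_sample = prob_space D for D :: "((real^'n) \<times> real) measure" +
  assumes sets_D: "sets D = sets (borel :: ((real^'n) \<times> real) measure)"
    and marginal_D: "distr D borel fst = unif_sphere"
begin

lemma space_D: "space D = UNIV"
  using sets_eq_imp_space_eq[OF sets_D] by simp

lemma measurable_D_iff: "f \<in> measurable D M \<longleftrightarrow> f \<in> measurable (borel \<Otimes>\<^sub>M borel) M"
  by (simp add: borel_prod measurable_cong_sets[OF sets_D refl])

lemma measurable_fst_D [measurable]: "fst \<in> measurable D borel"
  by (simp add: measurable_D_iff)

lemma measurable_snd_D [measurable]: "snd \<in> measurable D borel"
  by (simp add: measurable_D_iff)

lemma integral_fst_D:
  "(g :: real^'n \<Rightarrow> real) \<in> borel_measurable borel \<Longrightarrow> (\<integral>z. g (fst z) \<partial>D) = integral\<^sup>L unif_sphere g"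
  using integral_distr[OF measurable_fst_D, of g] by (simp add: marginal_D)

lemma integrable_fst_D:
  "integrable unif_sphere (g :: real^'n \<Rightarrow> real) \<Longrightarrow> g \<in> borel_measurable borel \<Longrightarrow> integrable D (\<lambda>z. g (fst z))"
  using integrable_distr_eq[OF measurable_fst_D, of g] by (simp add: marginal_D)

lemma measure_fst_D: "A \<in> sets borel \<Longrightarrow> measure D {(x, y). x \<in> A} = measure unif_sphere A"
proof -
  have "{(x, y). x \<in> A} = fst -` A \<inter> space D"
    by (auto simp: space_D)
  then show "A \<in> sets borel \<Longrightarrow> ?thesis"
    using measure_distr[OF measurable_fst_D, of A] by (simp add: marginal_D)
qed

lemma AE_norm_fst_D: "AE z in D. norm (fst z) = 1"
proof -
  have "AE x in distr D borel fst. norm x = 1"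
    unfolding marginal_D by (rule AE_unif_sphere_norm)
  then show ?thesis
    by (subst (asm) AE_distr_iff) auto
qed


lemma sets_noisy_D: "{(x, y). y \<noteq> sgn (u \<bullet> x)} \<in> sets D"
proof -
  have "{z \<in> space D. snd z \<noteq> sgn (u \<bullet> fst z)} \<in> sets D"
    by measurable
  moreover have "{(x, y). y \<noteq> sgn (u \<bullet> x)} = {z. snd z \<noteq> sgn (u \<bullet> fst z)}"
    by auto
  ultimately show ?thesis
    by (simp add: space_D)
qed

text \<open>The noise condition bounds the label-flip part of \<open>D\<close>, pushed to the instances, by
  \<open>\<eta>\<close> times the marginal; integrating \<open>g\<close> against both measures gives the bound.\<close>
lemma integral_noisy_le:
  fixes g :: "real^'n \<Rightarrow> real" and u :: "real^'n"
  assumes noise: "bounded_noise D \<eta> u" and \<eta>: "0 \<le> \<eta>"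
    and g[measurable]: "g \<in> borel_measurable borel" and g_nonneg: "\<And>x. 0 \<le> g x"
    and g_int: "integrable unif_sphere g"
  shows "(\<integral>z. indicator {(x, y). y \<noteq> sgn (u \<bullet> x)} z * g (fst z) \<partial>D) \<le> \<eta> * integral\<^sup>L unif_sphere g"
proof -
  interpret U: prob_space "unif_sphere :: (real^'n) measure"
    by (rule prob_space_unif_sphere)
  define N where "N = ({(x, y). y \<noteq> sgn (u \<bullet> x)} :: ((real^'n) \<times> real) set)"
  have N: "N \<in> sets D"
    unfolding N_def by (rule sets_noisy_D)
  define M where "M = distr (density D (indicator N)) borel fst"
  have fst_N: "fst \<in> measurable (density D (indicator N)) borel"
    by (simp add: measurable_cong_sets[OF sets_density refl])
  have M_le: "M \<le> scale_measure (ennreal \<eta>) unif_sphere"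
  proof (subst le_measure, simp_all add: M_def, intro ballI)
    fix A :: "(real^'n) set" assume A: "A \<in> sets borel"
    have "fst -` A \<in> sets D"
      using measurable_sets[OF measurable_fst_D A] by (simp add: space_D)
    then have "emeasure (density D (indicator N)) (fst -` A) = (\<integral>\<^sup>+ z. indicator (N \<inter> fst -` A) z \<partial>D)"
      using N by (simp add: emeasure_density indicator_inter_arith ennreal_mult' mult.commute)
    also have "\<dots> = emeasure D (N \<inter> fst -` A)"
      using N \<open>fst -` A \<in> sets D\<close> by simp
    also have "N \<inter> fst -` A = {(x, y). x \<in> A \<and> y \<noteq> sgn (u \<bullet> x)}"
      by (auto simp: N_def)
    also have "emeasure D \<dots> \<le> ennreal (\<eta> * measure D {(x, y). x \<in> A})"
      using noise A unfolding bounded_noise_def by (simp add: emeasure_eq_measure ennreal_leI)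
    finally show "emeasure (distr (density D (indicator N)) borel fst) A \<le> ennreal \<eta> * emeasure unif_sphere A"
      using A fst_N \<eta> by (simp add: emeasure_distr space_D measure_fst_D U.emeasure_eq_measure ennreal_mult)
  qed
  have "ennreal (\<integral>z. indicator N z * g (fst z) \<partial>D) = (\<integral>\<^sup>+ z. indicator N z * ennreal (g (fst z)) \<partial>D)"
    using g_nonneg integrable_mult_indicator[OF N integrable_fst_D[OF g_int g]]
    by (subst nn_integral_eq_integral[symmetric]) (auto intro!: nn_integral_cong split: split_indicator)
  also have "\<dots> = (\<integral>\<^sup>+ x. ennreal (g x) \<partial>M)"
    using N fst_N by (simp add: M_def nn_integral_density nn_integral_distr)
  also have "\<dots> \<le> (\<integral>\<^sup>+ x. ennreal (g x) \<partial>scale_measure (ennreal \<eta>) unif_sphere)"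
    using M_le by (intro nn_integral_mono_measure) (simp_all add: M_def)
  also have "\<dots> = ennreal (\<eta> * integral\<^sup>L unif_sphere g)"
    using g_int g_nonneg \<eta>
    by (simp add: nn_integral_scale_measure nn_integral_eq_integral ennreal_mult integral_nonneg_AE)
  finally show ?thesis
    using \<eta> g_nonneg by (simp add: N_def ennreal_le_iff integral_nonneg_AE)
qed


lemma integral_cos_change_ge:
  fixes w u :: "real^'n"
  assumes noise: "bounded_noise D \<eta> u" and \<eta>: "0 \<le> \<eta>"
    and labels: "AE z in D. snd z \<in> {-1, 1}"
    and w: "norm w = 1" and u: "norm u = 1" and b: "0 < b"
  shows "(1 - \<eta>) * (\<integral>x. max (update_gain w u b x) 0 \<partial>unif_sphere)
         - \<eta> * (\<integral>x. max (- update_gain w u b x) 0 \<partial>unif_sphere)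
    \<le> (\<integral>z. indicator {(x, y). x \<bullet> w \<in> {b/2..b}} z *
            (let x = fst z; y = snd z;
                 w' = (if y * (w \<bullet> x) < 0 then w - (2 * (w \<bullet> x)) *\<^sub>R x else w)
             in cos (vangle w' u) - cos (vangle w u)) \<partial>D)"
    (is "_ \<le> integral\<^sup>L D ?H")
proof -
  define N where "N = ({(x, y). y \<noteq> sgn (u \<bullet> x)} :: ((real^'n) \<times> real) set)"
  define gp where "gp x = max (update_gain w u b x) 0" for x
  define gm where "gm x = max (- update_gain w u b x) 0" for x
  have bounded: "\<bar>gp x\<bar> \<le> 2" "\<bar>gm x\<bar> \<le> 2" if "norm x = 1" for x
    using abs_update_gain_le[OF that w u, of b] by (auto simp: gp_def gm_def max_def)
  have gp_meas [measurable]: "gp \<in> borel_measurable borel"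
    unfolding gp_def by measurable
  have gm_meas [measurable]: "gm \<in> borel_measurable borel"
    unfolding gm_def by measurable
  have int_gp: "integrable unif_sphere gp"
    using bounded(1) by (intro integrable_unif_sphere_bounded[where B=2]) simp_all
  have int_gm: "integrable unif_sphere gm"
    using bounded(2) by (intro integrable_unif_sphere_bounded[where B=2]) simp_all
  define W where "W z = (if snd z * (w \<bullet> fst z) < 0 then w - (2 * (w \<bullet> fst z)) *\<^sub>R fst z else w)" for z
  have H: "?H = (\<lambda>z. indicator {b/2..b} (fst z \<bullet> w) * (cos (arccos (W z \<bullet> u)) - cos (arccos (w \<bullet> u))))"
    by (auto simp: fun_eq_iff indicator_def vangle_def W_def)
  have "?H \<in> borel_measurable D"
    unfolding H W_def by measurable
  moreover have "AE z in D. norm (?H z) \<le> 2"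
  proof (rule AE_I2)
    fix z
    have "\<bar>cos (arccos (W z \<bullet> u)) - cos (arccos (w \<bullet> u))\<bar> \<le> 2"
      using abs_cos_le_one[of "arccos (W z \<bullet> u)"] abs_cos_le_one[of "arccos (w \<bullet> u)"] by linarith
    then show "norm (?H z) \<le> 2"
      using fun_cong[OF H, of z] by (simp add: abs_mult split: split_indicator)
  qed
  ultimately have int_H: "integrable D ?H"
    by (rule integrable_const_bound[rotated])
  have N: "N \<in> sets D"
    unfolding N_def by (rule sets_noisy_D)
  have "AE z in D. gp (fst z) - indicator N z * gp (fst z) - indicator N z * gm (fst z) \<le> ?H z"
    using AE_norm_fst_D labels
  proof eventually_elim
    case (elim z)
    obtain x y where z: "z = (x, y)"
      by (cases z)
    have Hz: "?H z = indicator {b/2..b} (x \<bullet> w) *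
        (cos (vangle (if y * (w \<bullet> x) < 0 then w - (2 * (w \<bullet> x)) *\<^sub>R x else w) u) - cos (vangle w u))"
      using fun_cong[OF H, of z] by (simp add: z W_def vangle_def)
    have "gp (fst z) - indicator N z * gp (fst z) - indicator N z * gm (fst z)
        = (1 - indicator N (x, y)) * max (update_gain w u b x) 0 - indicator N (x, y) * max (- update_gain w u b x) 0"
      by (simp add: z gp_def gm_def algebra_simps)
    then show ?case
      unfolding Hz N_def using elim z w u b by (simp only:) (rule update_cos_change_ge, auto)
  qed
  moreover have int: "integrable D (\<lambda>z. gp (fst z))" "integrable D (\<lambda>z. indicator N z * gp (fst z))"
      "integrable D (\<lambda>z. indicator N z * gm (fst z))"
    using integrable_mult_indicator[OF N integrable_fst_D[OF int_gp]]
      integrable_mult_indicator[OF N integrable_fst_D[OF int_gm]] integrable_fst_D[OF int_gp]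
    by simp_all
  ultimately have "(\<integral>z. gp (fst z) - indicator N z * gp (fst z) - indicator N z * gm (fst z) \<partial>D) \<le> integral\<^sup>L D ?H"
    using int_H by (intro integral_mono_AE) auto
  moreover have "(\<integral>z. gp (fst z) - indicator N z * gp (fst z) - indicator N z * gm (fst z) \<partial>D)
      = integral\<^sup>L unif_sphere gp - (\<integral>z. indicator N z * gp (fst z) \<partial>D) - (\<integral>z. indicator N z * gm (fst z) \<partial>D)"
    using int by (simp add: integral_fst_D)
  moreover have "(\<integral>z. indicator N z * gp (fst z) \<partial>D) \<le> \<eta> * integral\<^sup>L unif_sphere gp"
    unfolding N_def by (rule integral_noisy_le[OF noise \<eta> gp_meas _ int_gp]) (simp add: gp_def)
  moreover have "(\<integral>z. indicator N z * gm (fst z) \<partial>D) \<le> \<eta> * integral\<^sup>L unif_sphere gm"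
    unfolding N_def by (rule integral_noisy_le[OF noise \<eta> gm_meas _ int_gm]) (simp add: gm_def)
  ultimately show ?thesis
    unfolding gp_def[symmetric] gm_def[symmetric] by (simp add: algebra_simps)
qed

end

theorem lemma9:
  fixes D :: "((real^'n) \<times> real) measure"
    and eta c theta b :: real
    and u w :: "real^'n"
  assumes dim: "CARD('n) \<ge> 3"
    and eta: "0 \<le> eta" "eta < 1/2"
    and c: "0 < c" "c < 1/288"
    and theta: "0 < theta" "theta \<le> 27/50 * pi"
    and b: "b = c * (1 - 2*eta) * theta / sqrt (real CARD('n))"
    and D_prob: "prob_space D"
    and D_sets: "sets D = sets (borel :: ((real^'n) \<times> real) measure)"
    and D_labels: "AE z in D. snd z \<in> {-1, 1}"
    and D_marg: "distr D borel fst = unif_sphere"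
    and u: "norm u = 1"
    and noise: "bounded_noise D eta u"
    and w: "norm w = 1"
    and ang: "theta / 4 \<le> vangle w u" "vangle w u \<le> 5/3 * theta"
  shows "(\<integral>z. indicator {(x, y). x \<bullet> w \<in> {b/2..b}} z *
            (let x = fst z; y = snd z;
                 w' = (if y * (w \<bullet> x) < 0 then w - (2 * (w \<bullet> x)) *\<^sub>R x else w)
             in cos (vangle w' u) - cos (vangle w u)) \<partial>D)
          / measure D {(x, y). x \<bullet> w \<in> {b/2..b}}
         \<ge> c / (100 * pi) * ((1 - 2*eta)^2 * theta^2) / real CARD('n)"
proof -
  interpret sphere_sample D
    using D_prob D_sets D_marg by (simp add: sphere_sample_def sphere_sample_axioms_def)
  define \<alpha> \<beta> where "\<alpha> = w \<bullet> u" and "\<beta> = sqrt (1 - (w \<bullet> u)^2)"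
  have \<alpha>: "\<bar>\<alpha>\<bar> < 1" and \<beta>: "theta / 20 \<le> \<beta>"
    using vangle_bounds_imp[OF w u theta ang] by (simp_all add: \<alpha>_def \<beta>_def)
  obtain v where v: "norm v = 1" "w \<bullet> v = 0" and u_eq: "u = \<alpha> *\<^sub>R w + \<beta> *\<^sub>R v"
    using unit_orthogonal_decomposition[OF w u] \<alpha> unfolding \<alpha>_def \<beta>_def by blast
  have b_pos: "0 < b"
    using b c eta theta by simp
  have "b \<le> c * (1 - 2*eta) * theta / 1"
    unfolding b using c eta theta dim by (intro divide_left_mono) auto
  also have "\<dots> \<le> c * theta"
    using c eta theta by (simp add: mult_le_cancel_left1 mult.commute mult.left_commute)
  also have "\<dots> \<le> 1/288 * 4"
    using c theta pi_less_4 by (intro mult_mono) auto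
  finally have b_le: "b \<le> 1/4"
    by simp
  define P where "P = measure unif_sphere {x. x \<bullet> w \<in> {b/2..b}}"
  have P: "0 < P"
    using measure_unif_sphere_band_pos[OF b_pos _ w v] b_le by (simp add: P_def)
  have P_D: "measure D {(x, y). x \<bullet> w \<in> {b/2..b}} = P"
    using measure_fst_D[of "{x. x \<bullet> w \<in> {b/2..b}}"] by (simp add: P_def)
  have "(\<integral>x. indicator {b/2..b} (x \<bullet> w) \<partial>unif_sphere) = P"
    unfolding P_def by (rule integral_unif_sphere_indicator_inner) simp
  then have "((1 - 2 * eta) * b * \<beta> / (6 * sqrt (real CARD('n))) - b^2) * P
      \<le> (1 - eta) * (\<integral>x. max (update_gain w u b x) 0 \<partial>unif_sphere)
        - eta * (\<integral>x. max (- update_gain w u b x) 0 \<partial>unif_sphere)"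
    using integral_update_gain_noisy_ge[OF w v u u_eq _ _ b_pos b_le _ eta(1)] \<alpha> \<beta> theta dim eta
    by simp
  also have "\<dots> \<le> (\<integral>z. indicator {(x, y). x \<bullet> w \<in> {b/2..b}} z *
            (let x = fst z; y = snd z;
                 w' = (if y * (w \<bullet> x) < 0 then w - (2 * (w \<bullet> x)) *\<^sub>R x else w)
             in cos (vangle w' u) - cos (vangle w u)) \<partial>D)"
    by (rule integral_cos_change_ge[OF noise eta(1) D_labels w u b_pos])
  finally have "c / (100 * pi) * ((1 - 2*eta)^2 * theta^2) / real CARD('n)
      \<le> (\<integral>z. indicator {(x, y). x \<bullet> w \<in> {b/2..b}} z *
            (let x = fst z; y = snd z;
                 w' = (if y * (w \<bullet> x) < 0 then w - (2 * (w \<bullet> x)) *\<^sub>R x else w)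
             in cos (vangle w' u) - cos (vangle w u)) \<partial>D) / P"
    using eta dim by (intro drift_lower_bound_arith[OF c _ theta(1) \<beta> _ b P]) auto
  then show ?thesis
    unfolding P_D .
qed

end
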